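(* Let $(X,T)$ be a minimal weakly mixing topological dynamical system and let $A=\{x\in X:(x,x)\text{ is a minimal point of }(X\times X,T\times T^2)\}$. Then one of the following holds: (1) $A=X$; (2) $A$ is non-empty and is a subset of first category in $X$; (3) $A$ is empty.
   Context: A topological dynamical system is $(X,T)$ with $X$ compact metric and $T$ a homeomorphism; minimal: every orbit dense; weakly mixing: $(X\times X,T\times T)$ is transitive. A point is minimal if its orbit closure is a minimal subsystem. *)

theory Defs
  imports "HOL-Analysis.Analysis"
begin

definition tds :: "'a::metric_space set \<Rightarrow> ('a \<Rightarrow> 'a) \<Rightarrow> bool" where
  "tds X T \<longleftrightarrow> compact X \<and> (\<exists>S. homeomorphism X X T S)"

definition orbit :: "'a set \<Rightarrow> ('a \<Rightarrow> 'a) \<Rightarrow> 'a \<Rightarrow> 'a set" where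
  "orbit X T x = {y \<in> X. \<exists>n::nat. (T ^^ n) x = y \<or> (T ^^ n) y = x}"

definition minimal_sys :: "'a::metric_space set \<Rightarrow> ('a \<Rightarrow> 'a) \<Rightarrow> bool" where
  "minimal_sys X T \<longleftrightarrow> tds X T \<and> (\<forall>x\<in>X. closure (orbit X T x) = X)"

definition minimal_point :: "'a::metric_space set \<Rightarrow> ('a \<Rightarrow> 'a) \<Rightarrow> 'a \<Rightarrow> bool" where
  "minimal_point X T x \<longleftrightarrow> x \<in> X \<and> minimal_sys (closure (orbit X T x)) T"

definition transitive_sys :: "'a::metric_space set \<Rightarrow> ('a \<Rightarrow> 'a) \<Rightarrow> bool" where
  "transitive_sys X T \<longleftrightarrow> (\<forall>U V. openin (top_of_set X) U \<and> openin (top_of_set X) V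
      \<and> U \<noteq> {} \<and> V \<noteq> {} \<longrightarrow> (\<exists>n::nat. (T ^^ n) ` U \<inter> V \<noteq> {}))"

definition weakly_mixing :: "'a::metric_space set \<Rightarrow> ('a \<Rightarrow> 'a) \<Rightarrow> bool" where
  "weakly_mixing X T \<longleftrightarrow> tds X T \<and> transitive_sys (X \<times> X) (map_prod T T)"

definition nowhere_dense_in :: "'a::topological_space set \<Rightarrow> 'a set \<Rightarrow> bool" where
  "nowhere_dense_in X B \<longleftrightarrow> B \<subseteq> X \<and>
     (top_of_set X) interior_of ((top_of_set X) closure_of B) = {}"

definition first_category_in :: "'a::topological_space set \<Rightarrow> 'a set \<Rightarrow> bool" where
  "first_category_in X A \<longleftrightarrow> (\<exists>F. countable F \<and> A \<subseteq> \<Union>F \<and> (\<forall>B\<in>F. nowhere_dense_in X B))"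

end

theory Submission
  imports Defs
begin

(* The key fact is that for nonempty open U, V1, V2 some u \<in> U and n satisfy T^n u \<in> V1 and
   T^2n u \<in> V2.  Return-time sets N(P, Q) = {n. T^n P \<inter> Q \<noteq> {}} are syndetic by minimality
   and thick by weak mixing, so some n \<in> N(P1, Q1) has 2n \<in> N(P2, Q2).  Minimality also bounds
   the time needed to enter U, so finitely many images id \<times> T^i of E = {(T^m u, T^2m u). u \<in> U}
   have a dense union in X \<times> X.  Hence E is dense in some open rectangle P1 \<times> P2, and the
   previous step applied to P1 \<times> P2 yields u and n.
   Consequently the x for which (x, x) has a non-dense orbit under T \<times> T^2 form a set of first
   category.  If some (x, x) with x \<in> A has a dense orbit, then T \<times> T^2 is minimal on X \<times> X
   and A = X; otherwise A lies in that set of first category. *)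

lemma funpow_map_prod_apply:
  fixes f :: "'a \<Rightarrow> 'a" and g :: "'b \<Rightarrow> 'b"
  shows "(map_prod f g ^^ n) (a, b) = ((f ^^ n) a, (g ^^ n) b)"
  by (induction n) auto

lemma funpow_apply_add: "(f ^^ m) ((f ^^ n) x) = (f ^^ (m + n)) x"
  by (simp add: funpow_add)

lemma funpow_comp_self: "(f \<circ> f) ^^ n = f ^^ (2 * n)"
  by (induction n) (auto simp: funpow_Suc_right)

lemma top_of_set_Times:
  "top_of_set (X \<times> Y) = prod_topology (top_of_set X) (top_of_set Y)"
  using subtopology_Times[of euclidean euclidean X Y] by simp

lemma homeomorphic_maps_top_of_set:
  "homeomorphism X Y f g \<Longrightarrow> homeomorphic_maps (top_of_set X) (top_of_set Y) f g"
  by (auto simp: homeomorphism_def homeomorphic_maps_def)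

lemma homeomorphic_map_map_prod:
  assumes "homeomorphism X X' f f'" and "homeomorphism Y Y' g g'"
  shows "homeomorphic_map (top_of_set (X \<times> Y)) (top_of_set (X' \<times> Y')) (map_prod f g)"
proof -
  have "homeomorphic_maps (top_of_set (X \<times> Y)) (top_of_set (X' \<times> Y'))
          (\<lambda>(x, y). (f x, g y)) (\<lambda>(x, y). (f' x, g' y))"
    unfolding top_of_set_Times homeomorphic_maps_prod
    using assms by (simp add: homeomorphic_maps_top_of_set)
  moreover have "map_prod f g = (\<lambda>(x, y). (f x, g y))"
    by (simp add: fun_eq_iff)
  ultimately show ?thesis
    unfolding homeomorphic_map_maps by metis
qed

lemma openin_Times_rectangle:
  assumes "openin (top_of_set (X \<times> Y)) W" and "(a, b) \<in> W"
  obtains U V where "openin (top_of_set X) U" "openin (top_of_set Y) V"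
    "a \<in> U" "b \<in> V" "U \<times> V \<subseteq> W"
proof -
  have "openin (prod_topology (top_of_set X) (top_of_set Y)) W"
    using assms(1) by (simp only: top_of_set_Times)
  then show ?thesis
    using assms(2) that unfolding openin_prod_topology_alt by meson
qed

lemma nowhere_dense_in_Un:
  "nowhere_dense_in X A \<Longrightarrow> nowhere_dense_in X B \<Longrightarrow> nowhere_dense_in X (A \<union> B)"
  unfolding nowhere_dense_in_def closure_of_Un
  by (simp add: interior_of_union_eq_empty[OF closedin_closure_of])

lemma nowhere_dense_in_UN:
  "finite I \<Longrightarrow> (\<And>i. i \<in> I \<Longrightarrow> nowhere_dense_in X (D i)) \<Longrightarrow> nowhere_dense_in X (\<Union>i\<in>I. D i)"
proof (induction I rule: finite_induct)
  case empty
  then show ?case by (simp add: nowhere_dense_in_def)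
next
  case (insert i I)
  then show ?case by (simp add: nowhere_dense_in_Un)
qed

lemma nowhere_dense_in_homeomorphic_image:
  assumes f: "homeomorphic_map (top_of_set X) (top_of_set Y) f" and B: "nowhere_dense_in X B"
  shows "nowhere_dense_in Y (f ` B)"
proof -
  have "B \<subseteq> topspace (top_of_set X)"
    using B by (simp add: nowhere_dense_in_def)
  then have "(top_of_set Y) interior_of ((top_of_set Y) closure_of (f ` B))
      = f ` ((top_of_set X) interior_of ((top_of_set X) closure_of B))"
    using homeomorphic_map_closure_of[OF f] homeomorphic_map_interior_of[OF f closure_of_subset_topspace]
    by metis
  moreover have "f ` B \<subseteq> Y"
    using \<open>B \<subseteq> topspace (top_of_set X)\<close> homeomorphic_imp_surjective_map[OF f] by auto
  ultimately show ?thesis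
    using B unfolding nowhere_dense_in_def by simp
qed

lemma not_nowhere_dense_in_TimesI:
  assumes "X \<noteq> {}" "Y \<noteq> {}"
    and meets: "\<And>U V. openin (top_of_set X) U \<Longrightarrow> openin (top_of_set Y) V \<Longrightarrow> U \<noteq> {} \<Longrightarrow> V \<noteq> {}
      \<Longrightarrow> D \<inter> (U \<times> V) \<noteq> {}"
  shows "\<not> nowhere_dense_in (X \<times> Y) D"
proof
  assume nd: "nowhere_dense_in (X \<times> Y) D"
  let ?C = "top_of_set (X \<times> Y) closure_of D"
  have "top_of_set (X \<times> Y) interior_of ?C = {}"
    using nd by (simp add: nowhere_dense_in_def)
  moreover have "X \<times> Y \<noteq> {}"
    using assms(1,2) by simp
  ultimately have "?C \<noteq> X \<times> Y"
    by (metis interior_of_topspace topspace_euclidean_subtopology)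
  then obtain a b where ab: "(a, b) \<in> X \<times> Y - ?C"
    using closure_of_subset_topspace[of "top_of_set (X \<times> Y)" D] by auto
  have "openin (top_of_set (X \<times> Y)) (X \<times> Y - ?C)"
    by (metis closedin_closure_of openin_diff openin_topspace topspace_euclidean_subtopology)
  then obtain U V where UV: "openin (top_of_set X) U" "openin (top_of_set Y) V"
      "a \<in> U" "b \<in> V" "U \<times> V \<subseteq> X \<times> Y - ?C"
    using ab openin_Times_rectangle by metis
  moreover have "D \<subseteq> ?C"
    using nd by (simp add: nowhere_dense_in_def closure_of_subset)
  ultimately have "D \<inter> (U \<times> V) = {}"
    by blast
  then show False
    using meets UV by blast
qed

lemma not_nowhere_dense_in_TimesE:
  assumes "\<not> nowhere_dense_in (X \<times> Y) E" and "E \<subseteq> X \<times> Y"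
  obtains U V where "openin (top_of_set X) U" "openin (top_of_set Y) V" "U \<noteq> {}" "V \<noteq> {}"
    "U \<times> V \<subseteq> top_of_set (X \<times> Y) closure_of E"
proof -
  let ?I = "top_of_set (X \<times> Y) interior_of (top_of_set (X \<times> Y) closure_of E)"
  have "?I \<noteq> {}"
    using assms by (simp add: nowhere_dense_in_def)
  then obtain a b where "(a, b) \<in> ?I"
    by auto
  moreover have "openin (top_of_set (X \<times> Y)) ?I"
    by (rule openin_interior_of)
  ultimately obtain U V where UV: "openin (top_of_set X) U" "openin (top_of_set Y) V"
      "a \<in> U" "b \<in> V" "U \<times> V \<subseteq> ?I"
    using openin_Times_rectangle by metis
  have "U \<times> V \<subseteq> top_of_set (X \<times> Y) closure_of E"
    using UV(5) interior_of_subset by (rule order_trans)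
  moreover have "U \<noteq> {}" "V \<noteq> {}"
    using UV(3,4) by auto
  ultimately show ?thesis
    using that UV(1,2) by blast
qed

lemma openin_subset_closure_of_Int_nonempty:
  assumes "openin X S" and "S \<subseteq> X closure_of E" and "S \<noteq> {}"
  shows "S \<inter> E \<noteq> {}"
proof -
  have "S \<inter> X closure_of E \<noteq> {}"
    using assms(2,3) by blast
  then show ?thesis
    unfolding openin_Int_closure_of_eq_empty[OF assms(1)] .
qed

lemma compact_imp_countable_dense_subset:
  fixes X :: "'a::metric_space set"
  assumes "compact X"
  obtains D where "countable D" "D \<subseteq> X" "\<And>x e. x \<in> X \<Longrightarrow> e > 0 \<Longrightarrow> \<exists>d\<in>D. dist x d < e"
proof -
  have "\<exists>F. finite F \<and> F \<subseteq> X \<and> X \<subseteq> (\<Union>c\<in>F. ball c (1 / Suc k))" for k :: nat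
  proof (rule compactE_image[OF assms, of X "\<lambda>c. ball c (1 / Suc k)"])
    show "X \<subseteq> (\<Union>c\<in>X. ball c (1 / Suc k))"
      by force
  qed auto
  then obtain F where F: "\<And>k. finite (F k)" "\<And>k. F k \<subseteq> X"
      "\<And>k. X \<subseteq> (\<Union>c\<in>F k. ball c (1 / Suc k))"
    by metis
  have "\<exists>d\<in>\<Union>(range F). dist x d < e" if "x \<in> X" "e > 0" for x e
  proof -
    obtain k where k: "1 / Suc k < e"
      using \<open>e > 0\<close> nat_approx_posE by blast
    obtain c where "c \<in> F k" "dist c x < 1 / Suc k"
      using F(3)[of k] \<open>x \<in> X\<close> by (auto simp: subset_iff)
    then show ?thesis
      using k by (intro bexI[of _ c]) (auto simp: dist_commute)
  qed
  moreover have "countable (\<Union>(range F))"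
    using F(1) by (simp add: countable_finite)
  ultimately show ?thesis
    using that F(2) by blast
qed

lemma minimal_point_if_dense_minimal_orbit:
  assumes "minimal_point Y \<Phi> p" and "closure (orbit Y \<Phi> p) = Y" and "q \<in> Y"
  shows "minimal_point Y \<Phi> q"
  using assms by (simp add: minimal_point_def minimal_sys_def)

lemma dist_Pair_le_add: "dist (a, b) (c, d) \<le> dist a c + dist b d"
  using sqrt_sum_squares_le_sum_abs[of "dist a c" "dist b d"] by (simp add: dist_Pair_Pair)

lemma first_category_in_subset: "first_category_in X B \<Longrightarrow> A \<subseteq> B \<Longrightarrow> first_category_in X A"
  unfolding first_category_in_def by blast

locale invertible_system =
  fixes X :: "'a::topological_space set" and T S :: "'a \<Rightarrow> 'a"
  assumes homeomorphism: "homeomorphism X X T S"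
begin

definition return_times :: "'a set \<Rightarrow> 'a set \<Rightarrow> nat set" where
  "return_times P Q = {n. \<exists>x\<in>P. (T ^^ n) x \<in> Q}"

definition diagonal_orbit :: "'a set \<Rightarrow> ('a \<times> 'a) set" where
  "diagonal_orbit U = {((T ^^ m) u, (T ^^ (2 * m)) u) | u m. u \<in> U}"

lemma homeomorphism_funpow: "homeomorphism X X (T ^^ n) (S ^^ n)"
proof (induction n)
  case 0
  then show ?case
    using homeomorphism_ident by (simp add: id_def)
next
  case (Suc n)
  have "T ^^ Suc n = T \<circ> T ^^ n" "S ^^ Suc n = S ^^ n \<circ> S"
    by (simp, rule funpow_Suc_right)
  then show ?case
    using homeomorphism_compose[OF Suc homeomorphism] by (simp only:)
qed

lemma funpow_in: "x \<in> X \<Longrightarrow> (T ^^ n) x \<in> X"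
  using homeomorphism_funpow[of n] unfolding homeomorphism_def by blast

lemma funpow_inverse_in: "x \<in> X \<Longrightarrow> (S ^^ n) x \<in> X"
  using homeomorphism_funpow[of n] unfolding homeomorphism_def by blast

lemma funpow_funpow_inverse: "x \<in> X \<Longrightarrow> (T ^^ n) ((S ^^ n) x) = x"
  using homeomorphism_funpow[of n] unfolding homeomorphism_def by blast

lemma funpow_inj: "x \<in> X \<Longrightarrow> y \<in> X \<Longrightarrow> (T ^^ n) x = (T ^^ n) y \<Longrightarrow> x = y"
  using homeomorphism_funpow[of n] unfolding homeomorphism_def by metis

lemma openin_preimage_funpow:
  assumes "openin (top_of_set X) W"
  shows "openin (top_of_set X) {x \<in> X. (T ^^ n) x \<in> W}"
proof -
  have "continuous_on X (T ^^ n)"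
    using homeomorphism_funpow[of n] unfolding homeomorphism_def by blast
  then have "openin (top_of_set X) (X \<inter> (T ^^ n) -` W)"
    using continuous_openin_preimage[of X "T ^^ n" X W] funpow_in assms by blast
  moreover have "X \<inter> (T ^^ n) -` W = {x \<in> X. (T ^^ n) x \<in> W}"
    by blast
  ultimately show ?thesis
    by simp
qed

lemma preimage_funpow_nonempty:
  assumes "W \<subseteq> X" and "W \<noteq> {}"
  shows "{x \<in> X. (T ^^ n) x \<in> W} \<noteq> {}"
proof -
  obtain w where "w \<in> W"
    using assms(2) by blast
  then have "(S ^^ n) w \<in> {x \<in> X. (T ^^ n) x \<in> W}"
    using assms(1) funpow_inverse_in funpow_funpow_inverse by auto
  then show ?thesis
    by blast
qed

lemma diagonal_orbit_shift:
  assumes "i \<le> n" and "(T ^^ i) y \<in> U"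
  shows "((T ^^ n) y, (T ^^ (2 * n)) y) \<in> map_prod id (T ^^ i) ` diagonal_orbit U"
proof -
  let ?u = "(T ^^ i) y"
  have "(T ^^ n) y = (T ^^ (n - i)) ?u"
    using assms(1) by (simp add: funpow_apply_add)
  moreover have "(T ^^ (2 * n)) y = (T ^^ i) ((T ^^ (2 * (n - i))) ?u)"
  proof -
    have "i + (2 * (n - i) + i) = 2 * n"
      using assms(1) by simp
    then show ?thesis
      by (simp only: funpow_apply_add)
  qed
  moreover have "((T ^^ (n - i)) ?u, (T ^^ (2 * (n - i))) ?u) \<in> diagonal_orbit U"
    using assms(2) unfolding diagonal_orbit_def by blast
  ultimately show ?thesis
    by (intro image_eqI[where x = "((T ^^ (n - i)) ?u, (T ^^ (2 * (n - i))) ?u)"]) simp_all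
qed
end

locale weakly_mixing_system = invertible_system X T S
  for X :: "'a::metric_space set" and T S +
  assumes transitive_square: "transitive_sys (X \<times> X) (map_prod T T)"
begin

lemma return_times_Int_nonempty:
  assumes "openin (top_of_set X) P1" "openin (top_of_set X) Q1"
    and "openin (top_of_set X) P2" "openin (top_of_set X) Q2"
    and "P1 \<noteq> {}" "Q1 \<noteq> {}" "P2 \<noteq> {}" "Q2 \<noteq> {}"
  shows "return_times P1 Q1 \<inter> return_times P2 Q2 \<noteq> {}"
proof -
  have "openin (top_of_set (X \<times> X)) (P1 \<times> P2)" "openin (top_of_set (X \<times> X)) (Q1 \<times> Q2)"
    using assms(1-4) by (simp_all add: openin_Times)
  moreover have "P1 \<times> P2 \<noteq> {}" "Q1 \<times> Q2 \<noteq> {}"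
    using assms(5-8) by simp_all
  ultimately have "\<exists>n. (map_prod T T ^^ n) ` (P1 \<times> P2) \<inter> (Q1 \<times> Q2) \<noteq> {}"
    using transitive_square unfolding transitive_sys_def by simp
  then obtain n where "(map_prod T T ^^ n) ` (P1 \<times> P2) \<inter> (Q1 \<times> Q2) \<noteq> {}" ..
  then obtain a b where "a \<in> P1" "b \<in> P2" "(T ^^ n) a \<in> Q1" "(T ^^ n) b \<in> Q2"
    by (auto simp: funpow_map_prod_apply)
  then have "n \<in> return_times P1 Q1" "n \<in> return_times P2 Q2"
    unfolding return_times_def by auto
  then show ?thesis
    by blast
qed

lemma return_times_thick:
  assumes "openin (top_of_set X) P" "openin (top_of_set X) Q" "P \<noteq> {}" "Q \<noteq> {}"
  shows "\<exists>m. {m..m + L} \<subseteq> return_times P Q"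
  using assms
proof (induction L arbitrary: P Q)
  case 0
  then obtain n where "n \<in> return_times P Q"
    using return_times_Int_nonempty[of P Q P Q] by blast
  then show ?case
    by auto
next
  case (Suc L)
  define Q' where "Q' = {x \<in> X. T x \<in> Q}"
  have Q': "openin (top_of_set X) Q'" "Q' \<noteq> {}"
    using openin_preimage_funpow[of Q 1] preimage_funpow_nonempty[of Q 1]
      Suc.prems openin_imp_subset[OF Suc.prems(2)]
    by (simp_all add: Q'_def)
  obtain k where k: "k \<in> return_times P P" "k \<in> return_times Q Q'"
    using return_times_Int_nonempty[of P P Q Q'] Suc.prems Q' by blast
  define P2 where "P2 = P \<inter> {x \<in> X. (T ^^ k) x \<in> P}"
  define Q2 where "Q2 = Q \<inter> {x \<in> X. (T ^^ k) x \<in> Q'}"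
  have "openin (top_of_set X) P2" "openin (top_of_set X) Q2"
    unfolding P2_def Q2_def using Suc.prems Q' openin_preimage_funpow by (simp_all add: openin_Int)
  moreover have "P2 \<noteq> {}" "Q2 \<noteq> {}"
    using k openin_imp_subset[OF Suc.prems(1)] openin_imp_subset[OF Suc.prems(2)]
    unfolding P2_def Q2_def return_times_def by blast+
  ultimately obtain m where m: "{m..m + L} \<subseteq> return_times P2 Q2"
    using Suc.IH by blast
  \<comment> \<open>if x \<in> P2 returns to Q2 at time n, then T^k x \<in> P returns to Q at time n + 1\<close>
  have step: "n \<in> return_times P Q \<and> Suc n \<in> return_times P Q"
    if n: "n \<in> return_times P2 Q2" for n
  proof -
    obtain x where x: "x \<in> P2" "(T ^^ n) x \<in> Q2"
      using n unfolding return_times_def by blast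
    have "(T ^^ Suc n) ((T ^^ k) x) = T ((T ^^ k) ((T ^^ n) x))"
      by (simp add: funpow_apply_add funpow_swap1 add.commute)
    then have "(T ^^ Suc n) ((T ^^ k) x) \<in> Q"
      using x unfolding Q2_def Q'_def by simp
    then show ?thesis
      using x unfolding P2_def Q2_def return_times_def by blast
  qed
  have "{m..m + Suc L} \<subseteq> {m..m + L} \<union> Suc ` {m..m + L}"
    by auto
  then show ?case
    using m step by blast
qed

lemma shifted_diagonal_orbits_meet_rectangles:
  assumes hit: "\<And>z. z \<in> X \<Longrightarrow> \<exists>i\<le>M. (T ^^ i) z \<in> U"
    and W: "openin (top_of_set X) W1" "openin (top_of_set X) W2" "W1 \<noteq> {}" "W2 \<noteq> {}"
  shows "(\<Union>i\<le>M. map_prod id (T ^^ i) ` diagonal_orbit U) \<inter> (W1 \<times> W2) \<noteq> {}"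
proof -
  have "openin (top_of_set X) {w \<in> X. (T ^^ M) w \<in> W2}" "{w \<in> X. (T ^^ M) w \<in> W2} \<noteq> {}"
    using openin_preimage_funpow[OF W(2)] preimage_funpow_nonempty[OF openin_imp_subset[OF W(2)] W(4)]
    by blast+
  then obtain m where "m \<in> return_times W1 {w \<in> X. (T ^^ M) w \<in> W2}"
    using return_times_Int_nonempty[OF W(1) _ W(1) _ W(3) _ W(3)] by blast
  then obtain z where z: "z \<in> W1" "(T ^^ (M + m)) z \<in> W2"
    unfolding return_times_def by (auto simp: funpow_apply_add)
  define n where "n = M + m"
  define y where "y = (S ^^ n) z"
  have "z \<in> X"
    using z(1) openin_imp_subset[OF W(1)] by blast
  then have y: "y \<in> X" "(T ^^ n) y = z"
    unfolding y_def using funpow_inverse_in funpow_funpow_inverse by blast+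
  obtain i where i: "i \<le> M" "(T ^^ i) y \<in> U"
    using hit y(1) by blast
  have "i \<le> n"
    using i(1) n_def by simp
  then have shift: "((T ^^ n) y, (T ^^ (2 * n)) y) \<in> map_prod id (T ^^ i) ` diagonal_orbit U"
    using i(2) by (rule diagonal_orbit_shift)
  have "(T ^^ (2 * n)) y = (T ^^ n) z"
    using y(2) funpow_apply_add[of n T n y] by (simp add: mult_2)
  then have "((T ^^ n) y, (T ^^ (2 * n)) y) \<in> W1 \<times> W2"
    using z y(2) n_def by simp
  with shift have "((T ^^ n) y, (T ^^ (2 * n)) y)
      \<in> (\<Union>i\<le>M. map_prod id (T ^^ i) ` diagonal_orbit U) \<inter> (W1 \<times> W2)"
    using i(1) by (intro IntI UN_I[of i]) simp_all
  then show ?thesis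
    by (rule ex_in_conv[THEN iffD1, OF exI])
qed

end

locale minimal_system = invertible_system X T S
  for X :: "'a::metric_space set" and T S +
  assumes compact: "compact X"
    and dense_orbit: "x \<in> X \<Longrightarrow> closure (orbit X T x) = X"
begin

lemma bounded_two_sided_hitting_time:
  assumes "openin (top_of_set X) Q" and "Q \<noteq> {}"
  obtains N where "\<And>z. z \<in> X \<Longrightarrow> \<exists>j<N. (T ^^ j) z \<in> Q \<or> z \<in> (T ^^ j) ` Q"
proof -
  define W where "W j = {z \<in> X. (T ^^ j) z \<in> Q} \<union> (T ^^ j) ` Q" for j
  have W_open: "openin (top_of_set X) (W j)" for j
    unfolding W_def using openin_preimage_funpow[OF assms(1)]
      homeomorphism_imp_open_map[OF homeomorphism_funpow assms(1)]
    by (rule openin_Un)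
  have "X \<subseteq> \<Union>(range W)"
  proof
    fix z
    assume z: "z \<in> X"
    obtain H where H: "open H" "Q = X \<inter> H"
      using assms(1) openin_open by blast
    have "Q \<subseteq> closure (orbit X T z)"
      using dense_orbit[OF z] H(2) by blast
    then have "H \<inter> orbit X T z \<noteq> {}"
      using assms(2) H open_Int_closure_eq_empty[of H "orbit X T z"] by blast
    then obtain y j where "y \<in> Q" "(T ^^ j) z = y \<or> (T ^^ j) y = z"
      unfolding orbit_def H(2) by blast
    then have "z \<in> W j"
      unfolding W_def using z by blast
    then show "z \<in> \<Union>(range W)"
      by blast
  qed
  then obtain D where D: "D \<subseteq> range W" "finite D" "X \<subseteq> \<Union>D"
    using compact W_open unfolding compact_eq_openin_cover by (metis rangeE)
  then obtain C where "finite C" "D = W ` C"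
    using finite_subset_image by metis
  then obtain N where "X \<subseteq> (\<Union>j<N. W j)"
    using D(3) finite_nat_bounded by (metis UN_mono order.trans subset_refl)
  then show ?thesis
    using that unfolding W_def by blast
qed

lemma bounded_hitting_time:
  assumes "openin (top_of_set X) Q" and "Q \<noteq> {}"
  obtains M where "\<And>z. z \<in> X \<Longrightarrow> \<exists>i\<le>M. (T ^^ i) z \<in> Q"
proof -
  obtain N where N: "\<And>z. z \<in> X \<Longrightarrow> \<exists>j<N. (T ^^ j) z \<in> Q \<or> z \<in> (T ^^ j) ` Q"
    using bounded_two_sided_hitting_time[OF assms] by blast
  \<comment> \<open>apply the two-sided bound to T^N z: a backward hit at time j is a forward hit at time N - j\<close>
  have "\<exists>i\<le>2 * N. (T ^^ i) z \<in> Q" if z: "z \<in> X" for z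
  proof -
    obtain j where j: "j < N" "(T ^^ j) ((T ^^ N) z) \<in> Q \<or> (T ^^ N) z \<in> (T ^^ j) ` Q"
      using N funpow_in z by blast
    then consider "(T ^^ j) ((T ^^ N) z) \<in> Q" | q where "q \<in> Q" "(T ^^ N) z = (T ^^ j) q"
      by blast
    then show ?thesis
    proof cases
      case 1
      then show ?thesis
        using j(1) by (intro exI[of _ "j + N"]) (simp add: funpow_apply_add)
    next
      case (2 q)
      have "(T ^^ j) ((T ^^ (N - j)) z) = (T ^^ j) q"
        using 2(2) j(1) by (simp add: funpow_apply_add)
      moreover have "q \<in> X"
        using 2(1) openin_imp_subset[OF assms(1)] by blast
      ultimately have "(T ^^ (N - j)) z = q"
        using funpow_inj funpow_in z by blast
      then show ?thesis
        using 2(1) by (intro exI[of _ "N - j"]) simp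
    qed
  qed
  then show ?thesis
    using that by blast
qed

lemma return_times_syndetic:
  assumes "openin (top_of_set X) Q" "Q \<noteq> {}" "P \<subseteq> X" "P \<noteq> {}"
  obtains L where "\<And>m. \<exists>k\<le>L. m + k \<in> return_times P Q"
proof -
  obtain M where M: "\<And>z. z \<in> X \<Longrightarrow> \<exists>i\<le>M. (T ^^ i) z \<in> Q"
    using bounded_hitting_time[OF assms(1,2)] by blast
  obtain x where x: "x \<in> P"
    using assms(4) by blast
  have "\<exists>k\<le>M. m + k \<in> return_times P Q" for m
  proof -
    obtain i where "i \<le> M" "(T ^^ i) ((T ^^ m) x) \<in> Q"
      using M funpow_in x assms(3) by blast
    then show ?thesis
      using x unfolding return_times_def by (auto simp: funpow_apply_add add.commute)
  qed
  then show ?thesis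
    using that by blast
qed


lemma non_dense_diagonal_orbit_misses_rectangle:
  assumes "x \<in> X" and "closure (orbit (X \<times> X) (map_prod T (T \<circ> T)) (x, x)) \<noteq> X \<times> X"
  obtains p q e where "p \<in> X" "q \<in> X" "e > 0"
    "\<And>n. (T ^^ n) x \<in> ball p e \<Longrightarrow> (T ^^ (2 * n)) x \<notin> ball q e"
proof -
  let ?O = "orbit (X \<times> X) (map_prod T (T \<circ> T)) (x, x)"
  have orbit_point: "((T ^^ n) x, (T ^^ (2 * n)) x) \<in> ?O" for n
  proof -
    have "(map_prod T (T \<circ> T) ^^ n) (x, x) = ((T ^^ n) x, (T ^^ (2 * n)) x)"
      by (simp add: funpow_map_prod_apply funpow_comp_self)
    then show ?thesis
      using assms(1) funpow_in unfolding orbit_def by (intro CollectI conjI exI[of _ n]) auto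
  qed
  have "closed (X \<times> X)"
    by (simp add: compact compact_Times compact_imp_closed)
  moreover have "?O \<subseteq> X \<times> X"
    unfolding orbit_def by blast
  ultimately have "closure ?O \<subseteq> X \<times> X"
    by (rule closure_minimal[rotated])
  then obtain p q where pq: "p \<in> X" "q \<in> X" "(p, q) \<notin> closure ?O"
    using assms(2) by auto
  then obtain e where e: "e > 0" "\<And>y. y \<in> ?O \<Longrightarrow> e \<le> dist y (p, q)"
    unfolding closure_approachable by (auto simp: not_less)
  have "(T ^^ (2 * n)) x \<notin> ball q (e / 2)" if "(T ^^ n) x \<in> ball p (e / 2)" for n
  proof
    assume "(T ^^ (2 * n)) x \<in> ball q (e / 2)"
    with that have "dist ((T ^^ n) x) p + dist ((T ^^ (2 * n)) x) q < e"
      by (simp add: dist_commute)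
    then have "dist ((T ^^ n) x, (T ^^ (2 * n)) x) (p, q) < e"
      using dist_Pair_le_add by (rule le_less_trans[rotated])
    then show False
      using e(2)[OF orbit_point[of n]] by simp
  qed
  then show ?thesis
    using that pq(1,2) e(1) half_gt_zero by blast
qed

end

locale minimal_weakly_mixing_system =
  weakly_mixing_system X T S + minimal_system X T S
  for X :: "'a::metric_space set" and T S
begin

lemma return_times_double:
  assumes "openin (top_of_set X) P1" "openin (top_of_set X) Q1"
    and "openin (top_of_set X) P2" "openin (top_of_set X) Q2"
    and "P1 \<noteq> {}" "Q1 \<noteq> {}" "P2 \<noteq> {}" "Q2 \<noteq> {}"
  shows "\<exists>n. n \<in> return_times P1 Q1 \<and> 2 * n \<in> return_times P2 Q2"
proof -
  obtain L where L: "\<And>m. \<exists>k\<le>L. m + k \<in> return_times P1 Q1"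
    using return_times_syndetic[OF assms(2,6) openin_imp_subset[OF assms(1)] assms(5)] by blast
  obtain m where m: "{m..m + (2 * L + 1)} \<subseteq> return_times P2 Q2"
    using return_times_thick[OF assms(3,4,7,8)] by blast
  \<comment> \<open>the window {m..m + 2L + 1} contains 2n for every n between (m + 1) div 2 and (m + 1) div 2 + L\<close>
  obtain k where k: "k \<le> L" "(m + 1) div 2 + k \<in> return_times P1 Q1"
    using L by blast
  moreover have "2 * ((m + 1) div 2 + k) \<in> {m..m + (2 * L + 1)}"
    using k(1) by auto
  ultimately show ?thesis
    using m by blast
qed

lemma diagonal_orbit_somewhere_dense:
  assumes "openin (top_of_set X) U" and "U \<noteq> {}"
  shows "\<not> nowhere_dense_in (X \<times> X) (diagonal_orbit U)"
proof
  assume E: "nowhere_dense_in (X \<times> X) (diagonal_orbit U)"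
  obtain M where M: "\<And>z. z \<in> X \<Longrightarrow> \<exists>i\<le>M. (T ^^ i) z \<in> U"
    using bounded_hitting_time[OF assms] by blast
  have X: "X \<noteq> {}"
    using assms openin_imp_subset by blast
  have id: "homeomorphism X X id id"
    using homeomorphism_ident by (simp add: id_def)
  have "nowhere_dense_in (X \<times> X) (map_prod id (T ^^ i) ` diagonal_orbit U)" for i
    using nowhere_dense_in_homeomorphic_image[OF homeomorphic_map_map_prod[OF id homeomorphism_funpow] E] .
  then have "nowhere_dense_in (X \<times> X) (\<Union>i\<le>M. map_prod id (T ^^ i) ` diagonal_orbit U)"
    by (intro nowhere_dense_in_UN) simp_all
  moreover have "\<not> nowhere_dense_in (X \<times> X) (\<Union>i\<le>M. map_prod id (T ^^ i) ` diagonal_orbit U)"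
    using shifted_diagonal_orbits_meet_rectangles[OF M] by (rule not_nowhere_dense_in_TimesI[OF X X])
  ultimately show False
    by contradiction
qed

lemma diagonal_recurrence:
  assumes "openin (top_of_set X) U" "openin (top_of_set X) V1" "openin (top_of_set X) V2"
    and "U \<noteq> {}" "V1 \<noteq> {}" "V2 \<noteq> {}"
  shows "\<exists>u\<in>U. \<exists>n. (T ^^ n) u \<in> V1 \<and> (T ^^ (2 * n)) u \<in> V2"
proof -
  let ?E = "diagonal_orbit U"
  have "?E \<subseteq> X \<times> X"
    using openin_imp_subset[OF assms(1)] funpow_in unfolding diagonal_orbit_def by blast
  then obtain P1 P2 where P: "openin (top_of_set X) P1" "openin (top_of_set X) P2"
      "P1 \<noteq> {}" "P2 \<noteq> {}" "P1 \<times> P2 \<subseteq> top_of_set (X \<times> X) closure_of ?E"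
    by (rule not_nowhere_dense_in_TimesE[OF diagonal_orbit_somewhere_dense[OF assms(1,4)]])
  obtain n where n: "n \<in> return_times P1 V1" "2 * n \<in> return_times P2 V2"
    using return_times_double[OF P(1) assms(2) P(2) assms(3) P(3) assms(5) P(4) assms(6)] by blast
  define P1' where "P1' = P1 \<inter> {x \<in> X. (T ^^ n) x \<in> V1}"
  define P2' where "P2' = P2 \<inter> {x \<in> X. (T ^^ (2 * n)) x \<in> V2}"
  have "openin (top_of_set (X \<times> X)) (P1' \<times> P2')"
    unfolding P1'_def P2'_def
    using P(1,2) assms(2,3) by (intro openin_Times openin_Int openin_preimage_funpow)
  moreover have "P1' \<times> P2' \<subseteq> top_of_set (X \<times> X) closure_of ?E"
    using P(5) unfolding P1'_def P2'_def by blast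
  moreover have "P1' \<times> P2' \<noteq> {}"
    using n openin_imp_subset[OF P(1)] openin_imp_subset[OF P(2)]
    unfolding P1'_def P2'_def return_times_def by blast
  ultimately have "P1' \<times> P2' \<inter> ?E \<noteq> {}"
    by (rule openin_subset_closure_of_Int_nonempty)
  then obtain p where p: "p \<in> P1' \<times> P2'" "p \<in> ?E"
    by blast
  then obtain u m where "u \<in> U" "p = ((T ^^ m) u, (T ^^ (2 * m)) u)"
    unfolding diagonal_orbit_def by blast
  with p(1) have u: "u \<in> U" "(T ^^ m) u \<in> P1'" "(T ^^ (2 * m)) u \<in> P2'"
    by simp_all
  have "(T ^^ (n + m)) u \<in> V1"
    using u(2) funpow_apply_add[of n T m u] unfolding P1'_def by simp
  moreover have "(T ^^ (2 * (n + m))) u \<in> V2"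
    using u(3) funpow_apply_add[of "2 * n" T "2 * m" u] unfolding P2'_def by (simp add: add_mult_distrib2)
  ultimately show ?thesis
    using u(1) by blast
qed

lemma nowhere_dense_diagonal_avoiding:
  assumes "openin (top_of_set X) V1" "openin (top_of_set X) V2" "V1 \<noteq> {}" "V2 \<noteq> {}"
  shows "nowhere_dense_in X {x \<in> X. \<forall>n. \<not> ((T ^^ n) x \<in> V1 \<and> (T ^^ (2 * n)) x \<in> V2)}"
    (is "nowhere_dense_in X ?F")
proof -
  let ?U = "top_of_set X interior_of (top_of_set X closure_of ?F)"
  have "?U = {}"
  proof (rule ccontr)
    assume "?U \<noteq> {}"
    then obtain u n where u: "u \<in> ?U" "(T ^^ n) u \<in> V1" "(T ^^ (2 * n)) u \<in> V2"
      using diagonal_recurrence[OF openin_interior_of assms(1,2) _ assms(3,4)] by blast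
    define G where "G = ?U \<inter> {x \<in> X. (T ^^ n) x \<in> V1} \<inter> {x \<in> X. (T ^^ (2 * n)) x \<in> V2}"
    have "openin (top_of_set X) G"
      unfolding G_def using assms(1,2) by (intro openin_Int openin_interior_of openin_preimage_funpow)
    moreover have "G \<subseteq> top_of_set X closure_of ?F"
      unfolding G_def using interior_of_subset[of "top_of_set X" "top_of_set X closure_of ?F"]
      by blast
    moreover have "G \<noteq> {}"
      using u interior_of_subset_topspace[of "top_of_set X"] unfolding G_def by auto
    ultimately have "G \<inter> ?F \<noteq> {}"
      by (rule openin_subset_closure_of_Int_nonempty)
    then show False
      unfolding G_def by blast
  qed
  then show ?thesis
    unfolding nowhere_dense_in_def by blast
qed

lemma first_category_non_dense_diagonal_orbits:
  "first_category_in X {x \<in> X. closure (orbit (X \<times> X) (map_prod T (T \<circ> T)) (x, x)) \<noteq> X \<times> X}"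
  (is "first_category_in X ?B")
proof -
  obtain D where D: "countable D" "D \<subseteq> X" "\<And>x e. x \<in> X \<Longrightarrow> e > 0 \<Longrightarrow> \<exists>d\<in>D. dist x d < e"
    using compact_imp_countable_dense_subset[OF compact] by blast
  define F where "F = (\<lambda>(d1, d2, k::nat). {x \<in> X. \<forall>n. \<not> ((T ^^ n) x \<in> X \<inter> ball d1 (1 / Suc k)
      \<and> (T ^^ (2 * n)) x \<in> X \<inter> ball d2 (1 / Suc k))})"
  have "countable (F ` (D \<times> D \<times> UNIV))"
    by (intro countable_image countable_SIGMA D(1) countableI_type)
  moreover have "nowhere_dense_in X (F (d1, d2, k))" if "d1 \<in> D" "d2 \<in> D" for d1 d2 k
  proof -
    have "X \<inter> ball d1 (1 / Suc k) \<noteq> {}" "X \<inter> ball d2 (1 / Suc k) \<noteq> {}"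
      using that D(2) by (auto intro!: exI)
    with nowhere_dense_diagonal_avoiding[OF openin_open_Int[OF open_ball] openin_open_Int[OF open_ball]]
    show ?thesis
      unfolding F_def prod.case .
  qed
  moreover have "?B \<subseteq> \<Union>(F ` (D \<times> D \<times> UNIV))"
  proof
    fix x
    assume x: "x \<in> ?B"
    then obtain p q e where pq: "p \<in> X" "q \<in> X" "e > 0"
        and miss: "\<And>n. (T ^^ n) x \<in> ball p e \<Longrightarrow> (T ^^ (2 * n)) x \<notin> ball q e"
      using non_dense_diagonal_orbit_misses_rectangle by blast
    obtain k :: nat where k: "1 / Suc k < e / 2"
      using pq(3) nat_approx_posE[of "e / 2"] by auto
    define r where "r = 1 / real (Suc k)"
    have r: "r > 0" "2 * r < e"
      using k by (simp_all add: r_def)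
    obtain d1 d2 where d: "d1 \<in> D" "d2 \<in> D" "dist p d1 < r" "dist q d2 < r"
      using D(3) pq(1,2) r(1) by meson
    have ball: "ball d r \<subseteq> ball c e" if "dist c d < r" for c d
    proof
      fix y
      assume "y \<in> ball d r"
      then show "y \<in> ball c e"
        using that r(2) dist_triangle[of c y d] by simp
    qed
    have "x \<in> F (d1, d2, k)"
      using x miss ball[OF d(3)] ball[OF d(4)] unfolding F_def r_def by blast
    then show "x \<in> \<Union>(F ` (D \<times> D \<times> UNIV))"
      using d(1,2) by blast
  qed
  ultimately show ?thesis
    unfolding first_category_in_def by blast
qed

end

theorem mainTheorem9:
  fixes X :: "'a::metric_space set" and T :: "'a \<Rightarrow> 'a"
  assumes "minimal_sys X T" and "weakly_mixing X T"
  defines "A \<equiv> {x \<in> X. minimal_point (X \<times> X) (map_prod T (T \<circ> T)) (x, x)}"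
  shows "A = X \<or> (A \<noteq> {} \<and> first_category_in X A) \<or> A = {}"
proof -
  obtain S where "homeomorphism X X T S" "compact X" "\<forall>x\<in>X. closure (orbit X T x) = X"
    using assms(1) unfolding minimal_sys_def tds_def by blast
  moreover have "transitive_sys (X \<times> X) (map_prod T T)"
    using assms(2) unfolding weakly_mixing_def by blast
  ultimately interpret minimal_weakly_mixing_system X T S
    by unfold_locales auto
  let ?\<Phi> = "map_prod T (T \<circ> T)"
  show ?thesis
  proof (cases "\<exists>x\<in>A. closure (orbit (X \<times> X) ?\<Phi> (x, x)) = X \<times> X")
    case True
    then obtain x where x: "x \<in> A" "closure (orbit (X \<times> X) ?\<Phi> (x, x)) = X \<times> X"
      by blast
    have "minimal_point (X \<times> X) ?\<Phi> (y, y)" if "y \<in> X" for y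
      using minimal_point_if_dense_minimal_orbit[of "X \<times> X" ?\<Phi> "(x, x)" "(y, y)"] x that
      unfolding A_def by blast
    then have "A = X"
      unfolding A_def by blast
    then show ?thesis
      by blast
  next
    case False
    then have "A \<subseteq> {x \<in> X. closure (orbit (X \<times> X) ?\<Phi> (x, x)) \<noteq> X \<times> X}"
      unfolding A_def by blast
    then have "first_category_in X A"
      using first_category_non_dense_diagonal_orbits by (rule first_category_in_subset[rotated])
    then show ?thesis
      by blast
  qed
qed

end
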